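(* In the scalar case $n=1$, with $A<0$ and $B\neq 0$ real numbers, for every $D>0$, $$\mathcal{I}^c(D)=(\log_2 e)\,\max\Big\{0,\;A+\frac{B^2}{2D}\Big\}.$$
   Context: Standing assumptions: $n\ge 1$. The matrix $A\in\mathbb{R}^{n\times n}$ is Hurwitz, i.e. all its eigenvalues have strictly negative real part. The matrix $B\in\mathbb{R}^{n\times n}$ satisfies $BB^\top\succ 0$. The matrix $\Sigma_0\in\mathbb{R}^{n\times n}$ satisfies $\Sigma_0\succ 0$. Definition of $\mathcal{F}$: $\mathcal{F}$ is the set of measurable functions $C:[0,\infty)\to\mathbb{R}^{n\times n}$, $t\mapsto C_t$, for which there exists an absolutely continuous $X:[0,\infty)\to\mathbb{R}^{n\times n}$ with $X_0=\Sigma_0$, $\|X_t\|_2<\infty$ and $X_t\succ 0$ for all $t\ge 0$, satisfying the Riccati equation $$\dot X_t=AX_t+X_tA^\top-X_tC_t^\top C_tX_t+BB^\top$$ for almost every $t$. Definition of the CT information-distortion function: for $D>0$, $$\mathcal{I}^c(D)=\inf_{C\in\mathcal{F}}\ \limsup_{T\to\infty}\frac1T\cdot\frac{1}{2\ln 2}\int_0^T\mathrm{Tr}(C_tX_tC_t^\top)\,dt$$ subject to $$\limsup_{T\to\infty}\frac1T\int_0^T\mathrm{Tr}(X_t)\,dt\le D,$$ where $X_t$ is the Riccati solution associated with $C_t$. The infimum of an empty set is $+\infty$. *)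

theory Defs
  imports "HOL-Analysis.Analysis"
begin

definition abs_continuous_on_interval :: "real \<Rightarrow> real \<Rightarrow> (real \<Rightarrow> real) \<Rightarrow> bool" where
  "abs_continuous_on_interval a b f \<longleftrightarrow>
     (\<forall>\<epsilon>>0. \<exists>\<delta>>0. \<forall>(n::nat) (I::nat \<Rightarrow> real \<times> real).
        (\<forall>k<n. a \<le> fst (I k) \<and> fst (I k) \<le> snd (I k) \<and> snd (I k) \<le> b) \<and>
        (\<forall>j<n. \<forall>k<n. j \<noteq> k \<longrightarrow> {fst (I j)<..<snd (I j)} \<inter> {fst (I k)<..<snd (I k)} = {}) \<and>
        (\<Sum>k<n. snd (I k) - fst (I k)) < \<delta>
        \<longrightarrow> (\<Sum>k<n. \<bar>f (snd (I k)) - f (fst (I k))\<bar>) < \<epsilon>)"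

definition abs_continuous_on_halfline :: "(real \<Rightarrow> real) \<Rightarrow> bool" where
  "abs_continuous_on_halfline f \<longleftrightarrow> (\<forall>b\<ge>0. abs_continuous_on_interval 0 b f)"

text \<open>Scalar case n = 1: the pair (C, X) is admissible, i.e. C is measurable on [0,\<infinity>) and
  X is an absolutely continuous, positive solution of the scalar Riccati equation
  dX/dt = 2 A X - C^2 X^2 + B^2 (a.e.) with X 0 = Sigma0.  (Finiteness of the norm is automatic.)\<close>
definition riccati_solution_scalar ::
  "real \<Rightarrow> real \<Rightarrow> real \<Rightarrow> (real \<Rightarrow> real) \<Rightarrow> (real \<Rightarrow> real) \<Rightarrow> bool" where
  "riccati_solution_scalar A B \<Sigma>0 C X \<longleftrightarrow>
     set_borel_measurable lborel {0..} C \<and>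
     abs_continuous_on_halfline X \<and> X 0 = \<Sigma>0 \<and> (\<forall>t\<ge>0. X t > 0) \<and>
     (AE t in lborel. t \<ge> 0 \<longrightarrow>
        (X has_real_derivative (A * X t + X t * A - X t * C t * C t * X t + B * B)) (at t))"

definition rate_scalar :: "(real \<Rightarrow> real) \<Rightarrow> (real \<Rightarrow> real) \<Rightarrow> ennreal" where
  "rate_scalar C X = Limsup at_top (\<lambda>T::real.
      ennreal (1 / T) * ennreal (1 / (2 * ln 2)) *
      (\<integral>\<^sup>+ t \<in> {0..T}. ennreal (C t * X t * C t) \<partial>lborel))"

definition distortion_scalar :: "(real \<Rightarrow> real) \<Rightarrow> ennreal" where
  "distortion_scalar X = Limsup at_top (\<lambda>T::real.
      ennreal (1 / T) * (\<integral>\<^sup>+ t \<in> {0..T}. ennreal (X t) \<partial>lborel))"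

text \<open>The CT information-distortion function (scalar case); Inf of the empty set is \<infinity> (= top).\<close>
definition info_distortion_scalar :: "real \<Rightarrow> real \<Rightarrow> real \<Rightarrow> real \<Rightarrow> ennreal" where
  "info_distortion_scalar A B \<Sigma>0 D =
     Inf {rate_scalar C X | C X. riccati_solution_scalar A B \<Sigma>0 C X \<and> distortion_scalar X \<le> ennreal D}"

end

theory Submission
  imports Defs
begin

text \<open>Along a solution of \<open>X' = 2 A X - C\<^sup>2 X\<^sup>2 + B\<^sup>2\<close> the potential
  \<open>- ln X + 2 A t + B\<^sup>2 \<integral>\<^sub>0\<^sup>t 1 / X\<close> has derivative \<open>C\<^sup>2 X\<close>, the integrand of the rate. Since \<open>X\<close>
  never exceeds \<open>max \<Sigma>0 (-B\<^sup>2 / (2 A))\<close>, the rate up to time \<open>T\<close> is at least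
  \<open>(2 A T + B\<^sup>2 \<integral>\<^sub>0\<^sup>T 1 / X - const) / (2 ln 2)\<close>; by convexity of \<open>1 / x\<close> an average distortion below
  \<open>a\<close> forces \<open>\<integral>\<^sub>0\<^sup>T 1 / X \<ge> T / a\<close>, and letting \<open>a\<close> decrease to \<open>D\<close> gives the lower bound
  \<open>(2 A + B\<^sup>2 / D) / (2 ln 2)\<close>. Conversely the gain \<open>C = \<surd>(B\<^sup>2 + 2 A Xf) / X\<close> with
  \<open>Xf = min D (-B\<^sup>2 / (2 A))\<close> linearises the equation, \<open>X\<close> relaxes exponentially to \<open>Xf\<close>, and this
  bound (or \<open>0\<close> when \<open>D\<close> exceeds the stationary variance) is attained.

  Solutions are only absolutely continuous, so the fundamental theorem of calculus is needed in the
  form \<open>f b - f a \<le> \<integral>\<^sub>a\<^sup>b g\<close> whenever \<open>f' \<le> g\<close> almost everywhere. It follows from a real-induction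
  argument: near the exceptional null set the increments of \<open>f\<close> are paid by a small variation
  budget, elsewhere by a monotone majorant of \<open>\<integral> g\<close> built from the superlevel sets of \<open>g\<close>.\<close>

section \<open>Absolutely continuous functions\<close>

definition nonoverlapping_intervals :: "real \<Rightarrow> real \<Rightarrow> nat \<Rightarrow> (nat \<Rightarrow> real \<times> real) \<Rightarrow> bool" where
  "nonoverlapping_intervals a b n I \<longleftrightarrow>
     (\<forall>k<n. a \<le> fst (I k) \<and> fst (I k) \<le> snd (I k) \<and> snd (I k) \<le> b) \<and>
     (\<forall>j<n. \<forall>k<n. j \<noteq> k \<longrightarrow> {fst (I j)<..<snd (I j)} \<inter> {fst (I k)<..<snd (I k)} = {})"

lemma abs_continuous_on_interval_iff:
  "abs_continuous_on_interval a b f \<longleftrightarrow>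
    (\<forall>e>0. \<exists>d>0. \<forall>n I. nonoverlapping_intervals a b n I \<and> (\<Sum>k<n. snd (I k) - fst (I k)) < d \<longrightarrow>
      (\<Sum>k<n. \<bar>f (snd (I k)) - f (fst (I k))\<bar>) < e)"
  unfolding abs_continuous_on_interval_def nonoverlapping_intervals_def by simp

lemma abs_continuous_on_intervalE:
  assumes "abs_continuous_on_interval a b f" "e > 0"
  obtains d where "d > 0"
    "\<And>n I. nonoverlapping_intervals a b n I \<Longrightarrow> (\<Sum>k<n. snd (I k) - fst (I k)) < d \<Longrightarrow>
       (\<Sum>k<n. \<bar>f (snd (I k)) - f (fst (I k))\<bar>) < e"
proof -
  from assms obtain d where "d > 0" "\<forall>n I. nonoverlapping_intervals a b n I \<and>
      (\<Sum>k<n. snd (I k) - fst (I k)) < d \<longrightarrow> (\<Sum>k<n. \<bar>f (snd (I k)) - f (fst (I k))\<bar>) < e"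
    unfolding abs_continuous_on_interval_iff by blast
  then show ?thesis using that by blast
qed

lemma nonoverlapping_intervals_mono:
  "nonoverlapping_intervals a' b' n I \<Longrightarrow> a \<le> a' \<Longrightarrow> b' \<le> b \<Longrightarrow> nonoverlapping_intervals a b n I"
  unfolding nonoverlapping_intervals_def by force

lemma nonoverlapping_intervals_snoc:
  assumes I: "nonoverlapping_intervals a x n I" and xy: "a \<le> x" "x \<le> y"
  shows "nonoverlapping_intervals a y (Suc n) (I(n := (x, y)))"
proof -
  have ends: "a \<le> fst (I k)" "fst (I k) \<le> snd (I k)" "snd (I k) \<le> x" if "k < n" for k
    using I that by (auto simp: nonoverlapping_intervals_def)
  show ?thesis
    unfolding nonoverlapping_intervals_def
  proof (rule conjI; intro allI impI)
    fix k assume "k < Suc n"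
    then show "a \<le> fst ((I(n := (x, y))) k) \<and> fst ((I(n := (x, y))) k) \<le> snd ((I(n := (x, y))) k) \<and>
        snd ((I(n := (x, y))) k) \<le> y"
      using ends xy by (cases "k = n") (auto simp: less_Suc_eq intro: order.trans)
  next
    fix j k assume jk: "j < Suc n" "k < Suc n" "j \<noteq> k"
    consider "j = n" "k < n" | "k = n" "j < n" | "j < n" "k < n"
      using jk by (auto simp: less_Suc_eq)
    then show "{fst ((I(n := (x, y))) j)<..<snd ((I(n := (x, y))) j)} \<inter>
        {fst ((I(n := (x, y))) k)<..<snd ((I(n := (x, y))) k)} = {}"
    proof cases
      case 1 then show ?thesis using ends(3)[of k] by auto
    next
      case 2 then show ?thesis using ends(3)[of j] by auto
    next
      case 3 then show ?thesis using I jk by (auto simp: nonoverlapping_intervals_def)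
    qed
  qed
qed

lemma abs_continuous_on_interval_imp_continuous_on:
  assumes "abs_continuous_on_interval a b f"
  shows "continuous_on {a..b} f"
  unfolding continuous_on_iff
proof (intro ballI allI impI)
  fix x e :: real assume x: "x \<in> {a..b}" and e: "0 < e"
  obtain d where d: "d > 0" and small: "\<And>n I. nonoverlapping_intervals a b n I \<Longrightarrow>
      (\<Sum>k<n. snd (I k) - fst (I k)) < d \<Longrightarrow> (\<Sum>k<n. \<bar>f (snd (I k)) - f (fst (I k))\<bar>) < e"
    using abs_continuous_on_intervalE[OF assms e] by blast
  show "\<exists>d>0. \<forall>x'\<in>{a..b}. dist x' x < d \<longrightarrow> dist (f x') (f x) < e"
  proof (intro exI[of _ d] conjI ballI impI)
    fix y assume y: "y \<in> {a..b}" "dist y x < d"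
    have "\<bar>f (max x y) - f (min x y)\<bar> < e"
      using small[of 1 "\<lambda>_. (min x y, max x y)"] x y
      by (auto simp: dist_real_def nonoverlapping_intervals_def)
    then show "dist (f y) (f x) < e"
      by (cases "x \<le> y") (auto simp: dist_real_def min_def max_def abs_minus_commute)
  qed (use d in auto)
qed

lemma abs_continuous_on_interval_dominated:
  assumes h: "abs_continuous_on_interval a b h" and L: "L \<ge> 0"
    and dom: "\<And>c d. a \<le> c \<Longrightarrow> c \<le> d \<Longrightarrow> d \<le> b \<Longrightarrow> \<bar>f d - f c\<bar> \<le> L * \<bar>h d - h c\<bar> + L * (d - c)"
  shows "abs_continuous_on_interval a b f"
  unfolding abs_continuous_on_interval_iff
proof (intro allI impI)
  fix e :: real assume e: "0 < e"
  define e' where "e' = e / (2 * (L + 1))"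
  have e': "e' > 0" using e L by (simp add: e'_def)
  obtain d where d: "d > 0" and small: "\<And>n I. nonoverlapping_intervals a b n I \<Longrightarrow>
      (\<Sum>k<n. snd (I k) - fst (I k)) < d \<Longrightarrow> (\<Sum>k<n. \<bar>h (snd (I k)) - h (fst (I k))\<bar>) < e'"
    using abs_continuous_on_intervalE[OF h e'] by blast
  show "\<exists>d>0. \<forall>n I. nonoverlapping_intervals a b n I \<and> (\<Sum>k<n. snd (I k) - fst (I k)) < d \<longrightarrow>
      (\<Sum>k<n. \<bar>f (snd (I k)) - f (fst (I k))\<bar>) < e"
  proof (intro exI[of _ "min d e'"] conjI allI impI)
    fix n and I :: "nat \<Rightarrow> real \<times> real"
    assume I: "nonoverlapping_intervals a b n I \<and> (\<Sum>k<n. snd (I k) - fst (I k)) < min d e'"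
    then have h_small: "(\<Sum>k<n. \<bar>h (snd (I k)) - h (fst (I k))\<bar>) < e'" by (intro small) auto
    have "(\<Sum>k<n. \<bar>f (snd (I k)) - f (fst (I k))\<bar>) \<le>
          (\<Sum>k<n. L * \<bar>h (snd (I k)) - h (fst (I k))\<bar> + L * (snd (I k) - fst (I k)))"
      by (rule sum_mono) (use I in \<open>auto intro!: dom simp: nonoverlapping_intervals_def\<close>)
    also have "\<dots> = L * (\<Sum>k<n. \<bar>h (snd (I k)) - h (fst (I k))\<bar>) + L * (\<Sum>k<n. snd (I k) - fst (I k))"
      by (simp add: sum.distrib sum_distrib_left)
    also have "\<dots> \<le> L * e' + L * e'"
      using h_small I L by (intro add_mono mult_left_mono) auto
    also have "\<dots> = e * (L / (L + 1))"
      using L by (simp add: e'_def divide_simps)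
    also have "\<dots> < e"
      using e L by (simp add: pos_divide_less_eq)
    finally show "(\<Sum>k<n. \<bar>f (snd (I k)) - f (fst (I k))\<bar>) < e" .
  qed (use d e' in auto)
qed

lemma abs_continuous_on_interval_lipschitz:
  assumes "L \<ge> 0" and "\<And>c d. a \<le> c \<Longrightarrow> c \<le> d \<Longrightarrow> d \<le> b \<Longrightarrow> \<bar>f d - f c\<bar> \<le> L * (d - c)"
  shows "abs_continuous_on_interval a b f"
proof (rule abs_continuous_on_interval_dominated[of a b "\<lambda>_. 0"])
  show "abs_continuous_on_interval a b (\<lambda>_. 0)"
    unfolding abs_continuous_on_interval_iff by (intro allI impI exI[of _ 1]) simp
qed (use assms in auto)

lemma abs_continuous_on_interval_subinterval:
  assumes "abs_continuous_on_interval a b f" "a \<le> a'" "b' \<le> b"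
  shows "abs_continuous_on_interval a' b' f"
  unfolding abs_continuous_on_interval_iff
proof (intro allI impI)
  fix e :: real assume "e > 0"
  then obtain d where "d > 0" and small: "\<And>n I. nonoverlapping_intervals a b n I \<Longrightarrow>
      (\<Sum>k<n. snd (I k) - fst (I k)) < d \<Longrightarrow> (\<Sum>k<n. \<bar>f (snd (I k)) - f (fst (I k))\<bar>) < e"
    using abs_continuous_on_intervalE[OF assms(1)] by blast
  then show "\<exists>d>0. \<forall>n I. nonoverlapping_intervals a' b' n I \<and> (\<Sum>k<n. snd (I k) - fst (I k)) < d \<longrightarrow>
      (\<Sum>k<n. \<bar>f (snd (I k)) - f (fst (I k))\<bar>) < e"
    using nonoverlapping_intervals_mono[OF _ assms(2,3)] by blast
qed

section \<open>Increments of absolutely continuous functions bounded by integrals\<close>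

lemma right_locally_nonincreasing_imp_le:
  fixes Q W :: "real \<Rightarrow> real"
  assumes ab: "a \<le> b" and Q: "continuous_on {a..b} Q"
    and W: "\<And>x y. a \<le> x \<Longrightarrow> x \<le> y \<Longrightarrow> y \<le> b \<Longrightarrow> W x \<le> W y"
    and local: "\<And>x. a \<le> x \<Longrightarrow> x < b \<Longrightarrow>
       \<exists>\<eta>>0. \<forall>y. x < y \<and> y < x + \<eta> \<and> y \<le> b \<longrightarrow> Q y - W y \<le> Q x - W x"
  shows "Q b - W b \<le> Q a - W a"
proof -
  define S where "S = {x\<in>{a..b}. Q x - W x \<le> Q a - W a}"
  define s where "s = Sup S"
  have aS: "a \<in> S" using ab by (simp add: S_def)
  have bdd: "bdd_above S" unfolding S_def by (rule bdd_aboveI[of _ b]) auto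
  have as: "a \<le> s" unfolding s_def using aS bdd by (rule cSup_upper)
  have sb: "s \<le> b" unfolding s_def using aS by (intro cSup_least) (auto simp: S_def)
  \<comment> \<open>\<open>W\<close> can only jump up, so the defining inequality of \<open>S\<close> survives the passage to \<open>s = Sup S\<close>.\<close>
  have sS: "Q s - W s \<le> Q a - W a"
  proof (rule field_le_epsilon)
    fix z :: real assume z: "z > 0"
    from Q as sb obtain th where th: "th > 0"
      "\<And>x. x \<in> {a..b} \<Longrightarrow> dist x s < th \<Longrightarrow> dist (Q x) (Q s) < z"
      using z unfolding continuous_on_iff by (meson atLeastAtMost_iff)
    show "Q s - W s \<le> Q a - W a + z"
    proof (cases "s = a")
      case True then show ?thesis using z by simp
    next
      case False
      then have "s - th < Sup S" using th by (simp add: s_def)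
      then obtain x where x: "x \<in> S" "s - th < x" using less_cSupE[of "s - th" S] aS by blast
      have xs: "x \<le> s" unfolding s_def using x bdd by (intro cSup_upper)
      have xab: "x \<in> {a..b}" using x by (auto simp: S_def)
      have "dist (Q x) (Q s) < z" using th(2)[OF xab] xs x by (auto simp: dist_real_def)
      moreover have "W x \<le> W s" using xab xs sb by (intro W) auto
      moreover have "Q x - W x \<le> Q a - W a" using x by (auto simp: S_def)
      ultimately show ?thesis by (auto simp: dist_real_def)
    qed
  qed
  have "s = b"
  proof (rule ccontr)
    assume "s \<noteq> b"
    then have "s < b" using sb by simp
    then obtain \<eta> where \<eta>: "\<eta> > 0"
      "\<And>y. s < y \<Longrightarrow> y < s + \<eta> \<Longrightarrow> y \<le> b \<Longrightarrow> Q y - W y \<le> Q s - W s"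
      using local[OF as] by blast
    define y where "y = min b (s + \<eta>/2)"
    have y: "s < y" "y < s + \<eta>" "y \<le> b" using \<eta> \<open>s < b\<close> by (auto simp: y_def)
    then have "y \<in> S" using \<eta>(2)[OF y] sS as by (auto simp: S_def)
    then have "y \<le> s" unfolding s_def using bdd by (rule cSup_upper)
    then show False using y by simp
  qed
  then show ?thesis using sS by simp
qed

lemma sum_interval_lengths_le_emeasure:
  assumes "nonoverlapping_intervals a b n I" "\<And>k. k < n \<Longrightarrow> {fst (I k)..snd (I k)} \<subseteq> U"
    "U \<in> sets lborel"
  shows "ennreal (\<Sum>k<n. snd (I k) - fst (I k)) \<le> emeasure lborel U"
proof -
  have le: "\<And>k. k < n \<Longrightarrow> fst (I k) \<le> snd (I k)"
    using assms(1) by (auto simp: nonoverlapping_intervals_def)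
  have "ennreal (\<Sum>k<n. snd (I k) - fst (I k)) = (\<Sum>k<n. ennreal (snd (I k) - fst (I k)))"
    using le by (subst sum_ennreal) auto
  also have "\<dots> = (\<Sum>k<n. emeasure lborel {fst (I k)<..<snd (I k)})"
    using le by (intro sum.cong) auto
  also have "\<dots> = emeasure lborel (\<Union>k\<in>{..<n}. {fst (I k)<..<snd (I k)})"
    using assms(1) by (intro sum_emeasure) (auto simp: disjoint_family_on_def nonoverlapping_intervals_def)
  also have "\<dots> \<le> emeasure lborel U"
    using assms(2,3) by (intro emeasure_mono) (force, simp)
  finally show ?thesis .
qed

lemma null_set_open_cover:
  assumes N: "N \<in> null_sets lborel" and d: "d > 0"
  obtains U where "open U" "N \<subseteq> U" "emeasure lborel U < ennreal d"
proof -
  have Nb: "N \<in> sets borel" using N by (simp add: null_sets_def)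
  obtain U where U: "open U" "N \<subseteq> U" "emeasure lborel (U - N) < ennreal d"
    using outer_regular_lborel[OF Nb d] by blast
  have "emeasure lborel U \<le> emeasure lborel (U - N) + emeasure lborel N"
    using U(1) Nb emeasure_subadditive[of "U - N" lborel N] emeasure_mono[of U "(U - N) \<union> N" lborel]
    by auto
  then show ?thesis using that U N by (simp add: null_setsD1)
qed

lemma abs_continuous_variation_within_small_set:
  assumes ac: "abs_continuous_on_interval a b f" and e: "e > 0"
  obtains d where "d > 0"
    "\<And>U n I. U \<in> sets lborel \<Longrightarrow> emeasure lborel U < ennreal d \<Longrightarrow> nonoverlapping_intervals a b n I \<Longrightarrow>
       (\<forall>k<n. {fst (I k)..snd (I k)} \<subseteq> U) \<Longrightarrow> (\<Sum>k<n. \<bar>f (snd (I k)) - f (fst (I k))\<bar>) < e"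
proof -
  obtain d where d: "d > 0" and small: "\<And>n I. nonoverlapping_intervals a b n I \<Longrightarrow>
      (\<Sum>k<n. snd (I k) - fst (I k)) < d \<Longrightarrow> (\<Sum>k<n. \<bar>f (snd (I k)) - f (fst (I k))\<bar>) < e"
    using abs_continuous_on_intervalE[OF ac e] by blast
  show ?thesis
  proof (rule that[OF d])
    fix U n I assume U: "U \<in> sets lborel" "emeasure lborel U < ennreal d"
      and I: "nonoverlapping_intervals a b n I" and sub: "\<forall>k<n. {fst (I k)..snd (I k)} \<subseteq> U"
    have "ennreal (\<Sum>k<n. snd (I k) - fst (I k)) < ennreal d"
      using sum_interval_lengths_le_emeasure[OF I _ U(1)] sub U(2) by (meson le_less_trans)
    then have "(\<Sum>k<n. snd (I k) - fst (I k)) < d"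
      using d by (cases "0 \<le> (\<Sum>k<n. snd (I k) - fst (I k))") (auto simp: ennreal_less_iff)
    then show "(\<Sum>k<n. \<bar>f (snd (I k)) - f (fst (I k))\<bar>) < e" using small[OF I] by simp
  qed
qed

text \<open>\<open>V x\<close> is the supremum of the variation of \<open>f\<close> over non-overlapping subintervals of \<open>[a, x]\<close>
  inside \<open>U\<close>; absolute continuity bounds it by \<open>e\<close> once \<open>U\<close> has small measure.\<close>
lemma abs_continuous_variation_budget:
  assumes ac: "abs_continuous_on_interval a b f" and e: "e > 0" and N: "N \<in> null_sets lborel"
  obtains U V where "open U" "N \<subseteq> U"
    "\<And>x. a \<le> x \<Longrightarrow> x \<le> b \<Longrightarrow> 0 \<le> V x \<and> V x \<le> e"
    "\<And>x y. a \<le> x \<Longrightarrow> x \<le> y \<Longrightarrow> y \<le> b \<Longrightarrow> V x \<le> V y"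
    "\<And>x y. a \<le> x \<Longrightarrow> x \<le> y \<Longrightarrow> y \<le> b \<Longrightarrow> {x..y} \<subseteq> U \<Longrightarrow> V x + \<bar>f y - f x\<bar> \<le> V y"
proof -
  obtain d where d: "d > 0" and small: "\<And>U n I. U \<in> sets lborel \<Longrightarrow> emeasure lborel U < ennreal d \<Longrightarrow>
      nonoverlapping_intervals a b n I \<Longrightarrow> (\<forall>k<n. {fst (I k)..snd (I k)} \<subseteq> U) \<Longrightarrow>
      (\<Sum>k<n. \<bar>f (snd (I k)) - f (fst (I k))\<bar>) < e"
    using abs_continuous_variation_within_small_set[OF ac e] by blast
  obtain U where U: "open U" "N \<subseteq> U" "emeasure lborel U < ennreal d"
    using null_set_open_cover[OF N d] by blast
  have Usets: "U \<in> sets lborel" using U(1) by simp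
  define collected where "collected x = {(\<Sum>k<n. \<bar>f (snd (I k)) - f (fst (I k))\<bar>) | n I.
     nonoverlapping_intervals a x n I \<and> (\<forall>k<n. {fst (I k)..snd (I k)} \<subseteq> U)}" for x
  define V where "V x = Sup (collected x)" for x
  have zero: "0 \<in> collected x" for x
    unfolding collected_def by (rule CollectI, rule exI[of _ 0], rule exI[of _ "\<lambda>_. (0, 0)"])
      (simp add: nonoverlapping_intervals_def)
  have below: "s < e" if s: "s \<in> collected x" and x: "x \<le> b" for s x
  proof -
    obtain n I where s: "s = (\<Sum>k<n. \<bar>f (snd (I k)) - f (fst (I k))\<bar>)"
      and I: "nonoverlapping_intervals a b n I" and sub: "\<forall>k<n. {fst (I k)..snd (I k)} \<subseteq> U"
      using s nonoverlapping_intervals_mono[of a x _ _ a b] x unfolding collected_def by blast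
    show ?thesis using small[OF Usets U(3) I sub] s by simp
  qed
  have bdd: "bdd_above (collected x)" if "x \<le> b" for x
    using below[OF _ that] by (intro bdd_aboveI[of _ e]) fastforce
  show ?thesis
  proof (rule that[of U V])
    show "open U" "N \<subseteq> U" using U by auto
    fix x assume x: "a \<le> x" "x \<le> b"
    show "0 \<le> V x \<and> V x \<le> e"
      unfolding V_def using zero bdd[OF x(2)] below[OF _ x(2)]
      by (auto intro: cSup_upper cSup_least less_imp_le)
  next
    fix x y assume xy: "a \<le> x" "x \<le> y" "y \<le> b"
    have "collected x \<subseteq> collected y"
      unfolding collected_def using nonoverlapping_intervals_mono[of a x _ _ a y] xy(2) by fastforce
    then show "V x \<le> V y" unfolding V_def using zero bdd[OF xy(3)]
      by (intro cSup_subset_mono) auto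
  next
    fix x y assume xy: "a \<le> x" "x \<le> y" "y \<le> b" and sub: "{x..y} \<subseteq> U"
    have "s + \<bar>f y - f x\<bar> \<le> V y" if s: "s \<in> collected x" for s
    proof -
      obtain n I where s: "s = (\<Sum>k<n. \<bar>f (snd (I k)) - f (fst (I k))\<bar>)"
        and I: "nonoverlapping_intervals a x n I" and subI: "\<forall>k<n. {fst (I k)..snd (I k)} \<subseteq> U"
        using s unfolding collected_def by blast
      define J where "J = I(n := (x, y))"
      have "\<forall>k<Suc n. {fst (J k)..snd (J k)} \<subseteq> U"
        using subI sub by (auto simp: J_def less_Suc_eq)
      then have "(\<Sum>k<Suc n. \<bar>f (snd (J k)) - f (fst (J k))\<bar>) \<in> collected y"
        unfolding collected_def J_def using nonoverlapping_intervals_snoc[OF I xy(1,2)] by blast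
      moreover have "(\<Sum>k<Suc n. \<bar>f (snd (J k)) - f (fst (J k))\<bar>) = s + \<bar>f y - f x\<bar>"
        by (simp add: J_def s)
      moreover have "(\<Sum>k<Suc n. \<bar>f (snd (J k)) - f (fst (J k))\<bar>) \<le> V y"
        unfolding V_def using calculation(1) bdd[OF xy(3)] by (rule cSup_upper)
      ultimately show ?thesis by simp
    qed
    then have "V x \<le> V y - \<bar>f y - f x\<bar>"
      unfolding V_def using zero by (intro cSup_least) (auto simp: field_simps)
    then show "V x + \<bar>f y - f x\<bar> \<le> V y" by simp
  qed
qed

lemma suminf_levels_below_le:
  fixes v e :: real
  assumes e: "e > 0" and v: "v \<ge> 0"
  shows "(\<Sum>j. if real (Suc j) * e < v then ennreal e else 0) \<le> ennreal v"
proof -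
  define k where "k = nat \<lfloor>v / e\<rfloor>"
  have "(if real (Suc j) * e < v then ennreal e else 0) = 0" if "j \<notin> {..<k}" for j
  proof -
    have "v / e < real k + 1" using v e by (simp add: k_def)
    also have "\<dots> \<le> real (Suc j)" using that by simp
    finally show ?thesis using e by (simp add: divide_less_eq)
  qed
  then have "(\<Sum>j. if real (Suc j) * e < v then ennreal e else 0) =
      (\<Sum>j<k. if real (Suc j) * e < v then ennreal e else 0)"
    by (intro suminf_finite) auto
  also have "\<dots> \<le> (\<Sum>j<k. ennreal e)"
    by (intro sum_mono) auto
  also have "\<dots> = ennreal (real k * e)"
    using e by (simp add: ennreal_mult ennreal_of_nat_eq_real_of_nat)
  also have "\<dots> \<le> ennreal v"
  proof (intro ennreal_leI)
    have "real k \<le> v / e" using v e by (simp add: k_def)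
    then show "real k * e \<le> v" using e by (simp add: le_divide_eq)
  qed
  finally show ?thesis .
qed

lemma suminf_level_sets_le_nn_integral:
  fixes g :: "real \<Rightarrow> real"
  assumes e: "e > 0" and g: "g \<in> borel_measurable borel" "\<And>t. t \<in> S \<Longrightarrow> g t \<ge> 0"
    and S: "S \<in> sets borel"
  shows "(\<Sum>j. ennreal e * emeasure lborel {t\<in>S. real (Suc j) * e < g t})
           \<le> (\<integral>\<^sup>+t\<in>S. ennreal (g t) \<partial>lborel)"
proof -
  define E where "E j = {t\<in>S. real (Suc j) * e < g t}" for j
  have E: "E j \<in> sets borel" for j unfolding E_def using g(1) S by measurable
  have "(\<Sum>j. ennreal e * emeasure lborel (E j)) = (\<Sum>j. \<integral>\<^sup>+t. ennreal e * indicator (E j) t \<partial>lborel)"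
    using E by (simp add: nn_integral_cmult_indicator)
  also have "\<dots> = (\<integral>\<^sup>+t. (\<Sum>j. ennreal e * indicator (E j) t) \<partial>lborel)"
    using E by (intro nn_integral_suminf[symmetric]) auto
  also have "\<dots> \<le> (\<integral>\<^sup>+t\<in>S. ennreal (g t) \<partial>lborel)"
  proof (intro nn_integral_mono)
    fix t
    show "(\<Sum>j. ennreal e * indicator (E j) t) \<le> ennreal (g t) * indicator S t"
    proof (cases "t \<in> S")
      case True
      have "(\<Sum>j. ennreal e * indicator (E j) t) = (\<Sum>j. if real (Suc j) * e < g t then ennreal e else 0)"
        using True by (intro suminf_cong) (simp add: E_def indicator_def)
      also have "\<dots> \<le> ennreal (g t)" using suminf_levels_below_le[OF e g(2)[OF True]] .
      finally show ?thesis using True by simp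
    qed (simp add: E_def)
  qed
  finally show ?thesis by (simp add: E_def)
qed

lemma suminf_emeasure_outer_approx_le:
  assumes e: "e \<ge> 0" and E: "\<And>j. E j \<in> sets borel" "\<And>j. E j \<subseteq> S" and U: "\<And>j. U j \<in> sets borel"
    and S: "S \<in> sets borel" and approx: "\<And>j. emeasure lborel (U j - E j) < ennreal ((1/2) ^ Suc j)"
  shows "(\<Sum>j. ennreal e * emeasure lborel (U j \<inter> S))
           \<le> (\<Sum>j. ennreal e * emeasure lborel (E j)) + ennreal e"
proof -
  have "emeasure lborel (U j \<inter> S) \<le> emeasure lborel (E j) + ennreal ((1/2) ^ Suc j)" for j
  proof -
    have "emeasure lborel (U j \<inter> S) \<le> emeasure lborel (E j \<union> (U j - E j))"
      using E U S by (intro emeasure_mono) auto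
    also have "\<dots> \<le> emeasure lborel (E j) + emeasure lborel (U j - E j)"
      using E U by (intro emeasure_subadditive) auto
    finally show ?thesis using approx[of j] by (meson add_left_mono less_imp_le order_trans)
  qed
  then have "(\<Sum>j. ennreal e * emeasure lborel (U j \<inter> S))
      \<le> (\<Sum>j. ennreal e * emeasure lborel (E j) + ennreal e * ennreal ((1/2) ^ Suc j))"
    by (intro suminf_le) (auto simp flip: distrib_left intro: mult_left_mono)
  also have "\<dots> = (\<Sum>j. ennreal e * emeasure lborel (E j)) + (\<Sum>j. ennreal e * ennreal ((1/2) ^ Suc j))"
    by (rule suminf_add[symmetric]) auto
  also have "(\<Sum>j. ennreal e * ennreal ((1/2) ^ Suc j)) = ennreal e"
  proof -
    have "(\<lambda>j. e * (1/2) ^ Suc j) sums (e * 1)"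
      using power_half_series by (rule sums_mult)
    then have "(\<Sum>j. ennreal (e * (1/2) ^ Suc j)) = ennreal e"
      using e by (subst suminf_ennreal2) (auto simp: sums_iff)
    moreover have "(\<Sum>j. ennreal e * ennreal ((1/2) ^ Suc j)) = (\<Sum>j. ennreal (e * (1/2) ^ Suc j))"
      using e by (intro suminf_cong) (rule ennreal_mult[symmetric], auto)
    ultimately show ?thesis by simp
  qed
  finally show ?thesis .
qed

lemma exists_levels_below:
  fixes v e :: real
  assumes "e > 0" "v \<ge> 0"
  obtains m :: nat where "\<And>j. j < m \<Longrightarrow> real (Suc j) * e < v" "v - e \<le> real m * e"
proof -
  define m where "m = nat (\<lceil>v / e\<rceil> - 1)"
  have "real (Suc j) < v / e" if "j < m" for j
    using that ceiling_correct[of "v / e"] by (simp add: m_def)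
  moreover have "v / e - 1 \<le> real m"
    using ceiling_correct[of "v / e"] by (simp add: m_def) linarith
  ultimately show ?thesis
    using assms by (intro that) (auto simp: field_simps)
qed

lemma suminf_emeasure_Int_right_growth:
  fixes U :: "nat \<Rightarrow> real set"
  assumes U: "\<And>j. open (U j)" and x: "\<And>j. j < m \<Longrightarrow> x \<in> U j" "a \<le> x" and e: "e \<ge> 0"
  obtains \<eta> where "\<eta> > 0" "\<And>y. x < y \<Longrightarrow> y < x + \<eta> \<Longrightarrow>
      (\<Sum>j. ennreal e * emeasure lborel (U j \<inter> {a..x})) + ennreal (real m * e * (y - x))
        \<le> (\<Sum>j. ennreal e * emeasure lborel (U j \<inter> {a..y}))"
proof -
  have "open (\<Inter>j<m. U j)" "x \<in> (\<Inter>j<m. U j)" using U x by auto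
  then obtain \<eta> where \<eta>: "\<eta> > 0" "ball x \<eta> \<subseteq> (\<Inter>j<m. U j)"
    by (meson openE)
  show ?thesis
  proof (rule that[OF \<eta>(1)])
    fix y assume y: "x < y" "y < x + \<eta>"
    have Ub: "U j \<in> sets lborel" for j using U by simp
    have split: "emeasure lborel (U j \<inter> {a..y}) =
        emeasure lborel (U j \<inter> {a..x}) + emeasure lborel (U j \<inter> {x<..y})" for j
    proof -
      have "U j \<inter> {a..y} = (U j \<inter> {a..x}) \<union> (U j \<inter> {x<..y})" using x y by auto
      then show ?thesis using Ub by (simp add: plus_emeasure disjoint_iff)
    qed
    have inside: "U j \<inter> {x<..y} = {x<..y}" if "j < m" for j
      using \<eta>(2) y that by (force simp: dist_real_def)
    have "ennreal (real m * e * (y - x)) = (\<Sum>j<m. ennreal e * emeasure lborel (U j \<inter> {x<..y}))"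
      using y e inside by (simp add: ennreal_mult mult.assoc ennreal_of_nat_eq_real_of_nat)
    also have "\<dots> \<le> (\<Sum>j. ennreal e * emeasure lborel (U j \<inter> {x<..y}))"
      by (intro sum_le_suminf) auto
    finally show "(\<Sum>j. ennreal e * emeasure lborel (U j \<inter> {a..x})) + ennreal (real m * e * (y - x))
        \<le> (\<Sum>j. ennreal e * emeasure lborel (U j \<inter> {a..y}))"
      by (simp add: split distrib_left suminf_add[symmetric] add_left_mono)
  qed
qed

text \<open>\<open>\<Psi> x\<close> sums, over the levels \<open>j e\<close>, \<open>e\<close> times the measure within \<open>[a, x]\<close> of an open
  neighbourhood of the superlevel set \<open>{g > j e}\<close>: openness gives the pointwise right growth, outer
  regularity keeps the total within \<open>e\<close> of \<open>\<integral> g\<close>.\<close>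
lemma nn_integral_right_growth_majorant:
  fixes g :: "real \<Rightarrow> real"
  assumes ab: "a \<le> b" and g: "g \<in> borel_measurable borel" "\<And>t. t \<in> {a..b} \<Longrightarrow> g t \<ge> 0"
    and e: "e > 0" and fin: "(\<integral>\<^sup>+t\<in>{a..b}. ennreal (g t) \<partial>lborel) < \<infinity>"
  obtains \<Psi> where "\<And>x y. a \<le> x \<Longrightarrow> x \<le> y \<Longrightarrow> y \<le> b \<Longrightarrow> \<Psi> x \<le> \<Psi> y" "\<Psi> a \<ge> 0"
    "\<Psi> b \<le> enn2real (\<integral>\<^sup>+t\<in>{a..b}. ennreal (g t) \<partial>lborel) + e"
    "\<And>x. a \<le> x \<Longrightarrow> x < b \<Longrightarrow>
       \<exists>\<eta>>0. \<forall>y. x < y \<and> y < x + \<eta> \<and> y \<le> b \<longrightarrow> (g x - e) * (y - x) \<le> \<Psi> y - \<Psi> x"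
proof -
  define IG where "IG = (\<integral>\<^sup>+t\<in>{a..b}. ennreal (g t) \<partial>lborel)"
  define E where "E j = {t \<in> {a..b}. real (Suc j) * e < g t}" for j
  have E: "E j \<in> sets borel" for j unfolding E_def using g(1) by measurable
  have "\<forall>j. \<exists>U. open U \<and> E j \<subseteq> U \<and> emeasure lborel (U - E j) < ennreal ((1/2) ^ Suc j)"
    using outer_regular_lborel[OF E] by (metis zero_less_divide_1_iff zero_less_numeral zero_less_power)
  then obtain U where U: "\<And>j. open (U j)" "\<And>j. E j \<subseteq> U j"
    "\<And>j. emeasure lborel (U j - E j) < ennreal ((1/2) ^ Suc j)"
    by metis
  define S where "S x = (\<Sum>j. ennreal e * emeasure lborel (U j \<inter> {a..x}))" for x
  have S_mono: "S x \<le> S y" if "x \<le> y" for x y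
    unfolding S_def using that U(1) by (intro suminf_le mult_left_mono emeasure_mono) auto
  have "S b \<le> (\<Sum>j. ennreal e * emeasure lborel (E j)) + ennreal e"
    unfolding S_def using e U by (intro suminf_emeasure_outer_approx_le E) (auto simp: E_def)
  also have "(\<Sum>j. ennreal e * emeasure lborel (E j)) \<le> IG"
    unfolding IG_def E_def by (rule suminf_level_sets_le_nn_integral[OF e g atLeastAtMost_borel])
  finally have Sb: "S b \<le> IG + ennreal e" by (simp add: add_right_mono)
  have S_finite: "S x < top" if "x \<le> b" for x
    using S_mono[OF that] Sb fin by (simp add: IG_def order.strict_trans1)
  show ?thesis
  proof (rule that[of "\<lambda>x. enn2real (S x)"])
    show "enn2real (S x) \<le> enn2real (S y)" if "a \<le> x" "x \<le> y" "y \<le> b" for x y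
      using that S_mono S_finite by (intro enn2real_mono) auto
    show "enn2real (S a) \<ge> 0" by simp
    have "enn2real (S b) \<le> enn2real (IG + ennreal e)"
      using Sb fin by (intro enn2real_mono) (auto simp: IG_def)
    also have "\<dots> = enn2real IG + e" using fin e by (simp add: IG_def enn2real_plus)
    finally show "enn2real (S b) \<le> enn2real (\<integral>\<^sup>+t\<in>{a..b}. ennreal (g t) \<partial>lborel) + e"
      by (simp add: IG_def)
  next
    fix x assume x: "a \<le> x" "x < b"
    obtain m where m: "\<And>j. j < m \<Longrightarrow> real (Suc j) * e < g x" "g x - e \<le> real m * e"
      using exists_levels_below[OF e g(2)[of x]] x by auto
    have xU: "x \<in> U j" if "j < m" for j using m(1)[OF that] x U(2)[of j] by (auto simp: E_def)
    obtain \<eta> where \<eta>: "\<eta> > 0" "\<And>y. x < y \<Longrightarrow> y < x + \<eta> \<Longrightarrow>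
        S x + ennreal (real m * e * (y - x)) \<le> S y"
      by (rule suminf_emeasure_Int_right_growth[of U m x a e]) (use U(1) xU x(1) e in \<open>auto simp: S_def\<close>)
    show "\<exists>\<eta>>0. \<forall>y. x < y \<and> y < x + \<eta> \<and> y \<le> b \<longrightarrow>
        (g x - e) * (y - x) \<le> enn2real (S y) - enn2real (S x)"
    proof (intro exI[of _ \<eta>] conjI allI impI)
      fix y assume y: "x < y \<and> y < x + \<eta> \<and> y \<le> b"
      have "enn2real (S x) + real m * e * (y - x) = enn2real (S x + ennreal (real m * e * (y - x)))"
        using S_finite[of x] x y e by (subst enn2real_plus) auto
      also have "\<dots> \<le> enn2real (S y)"
        using \<eta>(2) S_finite[of y] y by (intro enn2real_mono) auto
      finally have "real m * e * (y - x) \<le> enn2real (S y) - enn2real (S x)" by simp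
      moreover have "(g x - e) * (y - x) \<le> real m * e * (y - x)"
        using m(2) y by (intro mult_right_mono) auto
      ultimately show "(g x - e) * (y - x) \<le> enn2real (S y) - enn2real (S x)" by linarith
    qed (use \<eta> in auto)
  qed
qed

lemma has_real_derivative_right_increment_le:
  assumes "(f has_real_derivative d) (at x within S)" "e > 0"
  obtains \<eta> where "\<eta> > 0" "\<And>y. y \<in> S \<Longrightarrow> x < y \<Longrightarrow> y < x + \<eta> \<Longrightarrow> f y - f x \<le> (d + e) * (y - x)"
proof -
  obtain \<eta> where \<eta>: "\<eta> > 0"
    "\<And>y. y \<in> S \<Longrightarrow> norm (y - x) < \<eta> \<Longrightarrow> norm (f y - f x - d * (y - x)) \<le> e * norm (y - x)"
    using assms unfolding has_field_derivative_def has_derivative_within_alt by blast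
  show ?thesis
  proof (rule that[OF \<eta>(1)])
    fix y assume "y \<in> S" "x < y" "y < x + \<eta>"
    then have "\<bar>f y - f x - d * (y - x)\<bar> \<le> e * (y - x)" using \<eta>(2)[of y] by auto
    then show "f y - f x \<le> (d + e) * (y - x)" by (simp add: algebra_simps abs_le_iff)
  qed
qed

text \<open>On the null set where the derivative bound fails the variation budget \<open>V\<close> pays for the
  increments of \<open>f\<close>, elsewhere the majorant \<open>\<Psi>\<close> does; then \<open>f - 2 e x - \<Psi> - V\<close> is right-locally
  non-increasing.\<close>
lemma abs_continuous_increment_le_nn_integral_plus:
  assumes ab: "a \<le> b" and ac: "abs_continuous_on_interval a b f"
    and g: "g \<in> borel_measurable borel" "\<And>t. t \<in> {a..b} \<Longrightarrow> g t \<ge> 0"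
    and der: "AE t in lborel. t \<in> {a..b} \<longrightarrow>
       (\<exists>d. (f has_real_derivative d) (at t within {a..b}) \<and> d \<le> g t)"
    and e: "e > 0" and fin: "(\<integral>\<^sup>+t\<in>{a..b}. ennreal (g t) \<partial>lborel) < \<infinity>"
  shows "f b - f a \<le> enn2real (\<integral>\<^sup>+t\<in>{a..b}. ennreal (g t) \<partial>lborel) + e * (2 * (b - a) + 2)"
proof -
  define IG where "IG = enn2real (\<integral>\<^sup>+t\<in>{a..b}. ennreal (g t) \<partial>lborel)"
  obtain N where bad: "{t \<in> space lborel. \<not> (t \<in> {a..b} \<longrightarrow>
      (\<exists>d. (f has_real_derivative d) (at t within {a..b}) \<and> d \<le> g t))} \<subseteq> N"
    "emeasure lborel N = 0" "N \<in> sets lborel"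
    using der by (rule AE_E)
  have N: "N \<in> null_sets lborel" using bad by (simp add: null_sets_def)
  have good: "\<exists>d. (f has_real_derivative d) (at t within {a..b}) \<and> d \<le> g t"
    if "t \<notin> N" "t \<in> {a..b}" for t
    using that subsetD[OF bad(1), of t] by auto
  obtain U V where U: "open U" "N \<subseteq> U"
    and V: "\<And>x. a \<le> x \<Longrightarrow> x \<le> b \<Longrightarrow> 0 \<le> V x \<and> V x \<le> e"
      "\<And>x y. a \<le> x \<Longrightarrow> x \<le> y \<Longrightarrow> y \<le> b \<Longrightarrow> V x \<le> V y"
      "\<And>x y. a \<le> x \<Longrightarrow> x \<le> y \<Longrightarrow> y \<le> b \<Longrightarrow> {x..y} \<subseteq> U \<Longrightarrow> V x + \<bar>f y - f x\<bar> \<le> V y"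
    using abs_continuous_variation_budget[OF ac e N] by blast
  obtain \<Psi> where \<Psi>: "\<And>x y. a \<le> x \<Longrightarrow> x \<le> y \<Longrightarrow> y \<le> b \<Longrightarrow> \<Psi> x \<le> \<Psi> y" "\<Psi> a \<ge> 0"
    "\<Psi> b \<le> enn2real (\<integral>\<^sup>+t\<in>{a..b}. ennreal (g t) \<partial>lborel) + e"
    "\<And>x. a \<le> x \<Longrightarrow> x < b \<Longrightarrow>
       \<exists>\<eta>>0. \<forall>y. x < y \<and> y < x + \<eta> \<and> y \<le> b \<longrightarrow> (g x - e) * (y - x) \<le> \<Psi> y - \<Psi> x"
    using nn_integral_right_growth_majorant[OF ab g e fin] by blast
  define Q where "Q x = f x - 2 * e * x" for x
  define W where "W x = \<Psi> x + V x" for x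
  have "Q b - W b \<le> Q a - W a"
  proof (rule right_locally_nonincreasing_imp_le[OF ab])
    show "continuous_on {a..b} Q" unfolding Q_def
      using abs_continuous_on_interval_imp_continuous_on[OF ac] by (intro continuous_intros)
    show "W x \<le> W y" if "a \<le> x" "x \<le> y" "y \<le> b" for x y
      unfolding W_def using \<Psi>(1)[OF that] V(2)[OF that] by simp
  next
    fix x assume x: "a \<le> x" "x < b"
    show "\<exists>\<eta>>0. \<forall>y. x < y \<and> y < x + \<eta> \<and> y \<le> b \<longrightarrow> Q y - W y \<le> Q x - W x"
    proof (cases "x \<in> N")
      case True
      then obtain r where r: "r > 0" "ball x r \<subseteq> U" using U openE by blast
      show ?thesis
      proof (intro exI[of _ r] conjI allI impI)
        fix y assume y: "x < y \<and> y < x + r \<and> y \<le> b"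
        have "{x..y} \<subseteq> U" using r y by (force simp: dist_real_def)
        then have "V x + \<bar>f y - f x\<bar> \<le> V y" using V(3) x y by auto
        moreover have "\<Psi> x \<le> \<Psi> y" using \<Psi>(1) x y by auto
        moreover have "e * x \<le> e * y" using e y by simp
        ultimately show "Q y - W y \<le> Q x - W x" unfolding Q_def W_def by linarith
      qed (use r in auto)
    next
      case False
      then obtain d where d: "(f has_real_derivative d) (at x within {a..b})" "d \<le> g x"
        using good[OF False] x by auto
      obtain \<eta>1 where \<eta>1: "\<eta>1 > 0"
        "\<And>y. y \<in> {a..b} \<Longrightarrow> x < y \<Longrightarrow> y < x + \<eta>1 \<Longrightarrow> f y - f x \<le> (d + e) * (y - x)"
        using has_real_derivative_right_increment_le[OF d(1) e] by blast
      obtain \<eta>2 where \<eta>2: "\<eta>2 > 0"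
        "\<And>y. x < y \<Longrightarrow> y < x + \<eta>2 \<Longrightarrow> y \<le> b \<Longrightarrow> (g x - e) * (y - x) \<le> \<Psi> y - \<Psi> x"
        using \<Psi>(4)[OF x] by blast
      show ?thesis
      proof (intro exI[of _ "min \<eta>1 \<eta>2"] conjI allI impI)
        fix y assume y: "x < y \<and> y < x + min \<eta>1 \<eta>2 \<and> y \<le> b"
        have "f y - f x \<le> (d + e) * (y - x)" using \<eta>1(2)[of y] x y by auto
        moreover have "d * (y - x) \<le> g x * (y - x)" using d(2) y by (intro mult_right_mono) auto
        moreover have "(g x - e) * (y - x) \<le> \<Psi> y - \<Psi> x" using \<eta>2(2)[of y] y by auto
        moreover have "V x \<le> V y" using V(2) x y by auto
        ultimately show "Q y - W y \<le> Q x - W x" unfolding Q_def W_def by (simp add: algebra_simps)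
      qed (use \<eta>1 \<eta>2 in auto)
    qed
  qed
  then have "f b - f a \<le> 2 * e * (b - a) + (\<Psi> b - \<Psi> a) + (V b - V a)"
    unfolding Q_def W_def by (simp add: algebra_simps)
  also have "\<dots> \<le> 2 * e * (b - a) + (IG + e) + e"
    using \<Psi>(2,3) V(1)[of a] V(1)[of b] ab by (simp add: IG_def)
  finally show ?thesis by (simp add: IG_def algebra_simps)
qed

lemma abs_continuous_increment_le_nn_integral:
  assumes ab: "a \<le> b" and ac: "abs_continuous_on_interval a b f"
    and g: "g \<in> borel_measurable borel" "\<And>t. t \<in> {a..b} \<Longrightarrow> g t \<ge> 0"
    and der: "AE t in lborel. t \<in> {a..b} \<longrightarrow>
       (\<exists>d. (f has_real_derivative d) (at t within {a..b}) \<and> d \<le> g t)"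
  shows "ennreal (f b - f a) \<le> (\<integral>\<^sup>+t\<in>{a..b}. ennreal (g t) \<partial>lborel)"
proof (cases "(\<integral>\<^sup>+t\<in>{a..b}. ennreal (g t) \<partial>lborel) < \<infinity>")
  case fin: True
  define IG where "IG = enn2real (\<integral>\<^sup>+t\<in>{a..b}. ennreal (g t) \<partial>lborel)"
  have "f b - f a \<le> IG"
  proof (rule field_le_epsilon)
    fix z :: real assume z: "z > 0"
    define c where "c = 2 * (b - a) + 2"
    have c: "c > 0" using ab by (simp add: c_def)
    have "f b - f a \<le> IG + (z / c) * c"
      using abs_continuous_increment_le_nn_integral_plus[OF ab ac g der _ fin, of "z / c"] z c
      unfolding IG_def c_def by simp
    then show "f b - f a \<le> IG + z" using c by simp
  qed
  then have "ennreal (f b - f a) \<le> ennreal IG" by (rule ennreal_leI)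
  also have "ennreal IG = (\<integral>\<^sup>+t\<in>{a..b}. ennreal (g t) \<partial>lborel)"
    unfolding IG_def using fin by simp
  finally show ?thesis .
qed (simp add: not_less top_unique)

section \<open>Solutions of the scalar Riccati equation\<close>

lemma riccati_solution_scalarD:
  assumes "riccati_solution_scalar A B \<Sigma>0 C X"
  shows "set_borel_measurable lborel {0..} C"
    "\<And>b. b \<ge> 0 \<Longrightarrow> abs_continuous_on_interval 0 b X"
    "\<And>b. b \<ge> 0 \<Longrightarrow> continuous_on {0..b} X"
    "X 0 = \<Sigma>0" "\<And>t. t \<ge> 0 \<Longrightarrow> X t > 0"
    "AE t in lborel. t \<ge> 0 \<longrightarrow>
       (X has_real_derivative (A * X t + X t * A - X t * C t * C t * X t + B * B)) (at t)"
  using assms abs_continuous_on_interval_imp_continuous_on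
  unfolding riccati_solution_scalar_def abs_continuous_on_halfline_def by auto

lemma riccati_rhs_nonpos:
  fixes A B c x :: real
  assumes "A < 0" "-(B * B) / (2 * A) \<le> x"
  shows "A * x + x * A - x * c * c * x + B * B \<le> 0"
proof -
  have "A * x \<le> A * (-(B * B) / (2 * A))" using assms by (intro mult_left_mono_neg) auto
  also have "\<dots> = -(B * B) / 2" using assms(1) by (simp add: field_simps)
  finally have "A * x \<le> -(B * B) / 2" .
  moreover have "0 \<le> x * c * c * x" by (metis mult.commute mult.left_commute zero_le_square)
  moreover have "x * A = A * x" by (rule mult.commute)
  ultimately show ?thesis by linarith
qed

text \<open>After the last time \<open>s \<le> t\<close> at which \<open>X\<close> is below the bound, the solution stays above the
  stationary value \<open>-B\<^sup>2 / (2 A)\<close>, where its derivative is non-positive whatever the gain; hence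
  \<open>X t \<le> X s\<close>.\<close>
lemma riccati_solution_bounded:
  assumes ric: "riccati_solution_scalar A B \<Sigma>0 C X" and A: "A < 0" and t: "t \<ge> 0"
  shows "X t \<le> max \<Sigma>0 (-(B * B) / (2 * A))"
proof (rule ccontr)
  define M where "M = max \<Sigma>0 (-(B * B) / (2 * A))"
  assume "\<not> X t \<le> max \<Sigma>0 (-(B * B) / (2 * A))"
  then have XtM: "X t > M" unfolding M_def by linarith
  note X = riccati_solution_scalarD[OF ric]
  define S where "S = {0..t} \<inter> X -` {..M}"
  define s where "s = Sup S"
  have "closed S" unfolding S_def using X(3)[OF t] by (intro continuous_closed_preimage) auto
  moreover have "0 \<in> S" using t X(4) by (simp add: S_def M_def)
  moreover have bdd: "bdd_above S" unfolding S_def by (rule bdd_aboveI[of _ t]) auto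
  ultimately have "s \<in> S" unfolding s_def by (intro closed_contains_Sup) auto
  then have s: "0 \<le> s" "s \<le> t" "X s \<le> M" by (auto simp: S_def)
  have above: "X u > M" if "s < u" "u \<le> t" for u
  proof (rule ccontr)
    assume "\<not> X u > M"
    then have "u \<in> S" using that s by (auto simp: S_def)
    then have "u \<le> s" unfolding s_def using bdd by (rule cSup_upper)
    then show False using that by simp
  qed
  have "ennreal (X t - X s) \<le> (\<integral>\<^sup>+u\<in>{s..t}. ennreal 0 \<partial>lborel)"
  proof (rule abs_continuous_increment_le_nn_integral[OF s(2)])
    show "abs_continuous_on_interval s t X"
      using abs_continuous_on_interval_subinterval[OF X(2)[OF t], of s t] s by simp
    have pointwise: "u \<in> {s..t} \<longrightarrow> (\<exists>d. (X has_real_derivative d) (at u within {s..t}) \<and> d \<le> 0)"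
      if der: "u \<ge> 0 \<longrightarrow>
          (X has_real_derivative (A * X u + X u * A - X u * C u * C u * X u + B * B)) (at u)"
        and "u \<noteq> s" for u
    proof
      assume u: "u \<in> {s..t}"
      then have "-(B * B) / (2 * A) \<le> X u" using above[of u] \<open>u \<noteq> s\<close> by (auto simp: M_def)
      then have "A * X u + X u * A - X u * C u * C u * X u + B * B \<le> 0"
        by (rule riccati_rhs_nonpos[OF A])
      moreover have "(X has_real_derivative (A * X u + X u * A - X u * C u * C u * X u + B * B))
          (at u within {s..t})"
        using der u s by (auto intro: has_field_derivative_at_within)
      ultimately show "\<exists>d. (X has_real_derivative d) (at u within {s..t}) \<and> d \<le> 0" by blast
    qed
    show "AE u in lborel. u \<in> {s..t} \<longrightarrow>
        (\<exists>d. (X has_real_derivative d) (at u within {s..t}) \<and> d \<le> 0)"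
      using X(6) AE_lborel_singleton[of s] by eventually_elim (use pointwise in blast)
  qed auto
  then show False using s XtM by (simp add: ennreal_eq_0_iff)
qed

lemma abs_ln_diff_le:
  fixes x y m :: real
  assumes "m > 0" "x \<ge> m" "y \<ge> m"
  shows "\<bar>ln x - ln y\<bar> \<le> \<bar>x - y\<bar> / m"
proof -
  have half: "ln x - ln y \<le> \<bar>x - y\<bar> / m" if "x \<ge> m" "y \<ge> m" for x y
  proof -
    have xy: "x > 0" "y > 0" using that assms(1) by auto
    have "ln x - ln y = ln (x / y)" using xy by (simp add: ln_div)
    also have "\<dots> \<le> x / y - 1" using xy by (intro ln_le_minus_one) auto
    also have "\<dots> = (x - y) / y" using xy by (simp add: field_simps)
    also have "\<dots> \<le> \<bar>x - y\<bar> / m" using xy that assms(1) by (intro frac_le) auto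
    finally show ?thesis .
  qed
  show ?thesis using half[of x y] half[of y x] assms by (auto simp: abs_le_iff abs_minus_commute)
qed

lemma integral_inverse_increment_bounds:
  fixes X :: "real \<Rightarrow> real"
  assumes X: "continuous_on {0..T} X" "\<And>u. u \<in> {0..T} \<Longrightarrow> m \<le> X u" and m: "m > 0"
    and cd: "0 \<le> c" "c \<le> d" "d \<le> T"
  shows "0 \<le> integral {0..d} (\<lambda>s. 1 / X s) - integral {0..c} (\<lambda>s. 1 / X s)"
    "integral {0..d} (\<lambda>s. 1 / X s) - integral {0..c} (\<lambda>s. 1 / X s) \<le> (d - c) / m"
proof -
  have X0: "X u > 0" if "u \<in> {0..T}" for u using X(2)[OF that] m by simp
  have "(\<lambda>s. 1 / X s) integrable_on {0..T}"
    using X X0 by (intro integrable_continuous_interval continuous_intros) force+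
  then have int: "(\<lambda>s. 1 / X s) integrable_on {0..d}" "(\<lambda>s. 1 / X s) integrable_on {c..d}"
    using cd by (auto intro: integrable_on_subinterval)
  have eq: "integral {0..d} (\<lambda>s. 1 / X s) - integral {0..c} (\<lambda>s. 1 / X s) = integral {c..d} (\<lambda>s. 1 / X s)"
    using Henstock_Kurzweil_Integration.integral_combine[OF cd(1,2) int(1)] by simp
  show "0 \<le> integral {0..d} (\<lambda>s. 1 / X s) - integral {0..c} (\<lambda>s. 1 / X s)"
    unfolding eq using int cd X0 by (intro integral_nonneg) (auto simp: less_imp_le)
  have "integral {c..d} (\<lambda>s. 1 / X s) \<le> integral {c..d} (\<lambda>s. 1 / m)"
    using int cd X m by (intro integral_le frac_le) auto
  then show "integral {0..d} (\<lambda>s. 1 / X s) - integral {0..c} (\<lambda>s. 1 / X s) \<le> (d - c) / m"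
    unfolding eq using cd by simp
qed

text \<open>Along a solution the derivative of this potential is \<open>C\<^sup>2 X\<close>, the integrand of the rate.\<close>
definition riccati_potential :: "real \<Rightarrow> real \<Rightarrow> (real \<Rightarrow> real) \<Rightarrow> real \<Rightarrow> real" where
  "riccati_potential A B X u = - ln (X u) + 2 * A * u + B * B * integral {0..u} (\<lambda>s. 1 / X s)"

lemma riccati_potential_abs_continuous:
  assumes ric: "riccati_solution_scalar A B \<Sigma>0 C X" and T: "T \<ge> 0"
  shows "abs_continuous_on_interval 0 T (riccati_potential A B X)"
proof -
  note X = riccati_solution_scalarD[OF ric]
  obtain x0 where x0: "x0 \<in> {0..T}" "\<And>u. u \<in> {0..T} \<Longrightarrow> X x0 \<le> X u"
    using continuous_attains_inf[OF compact_Icc _ X(3)[OF T]] T by auto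
  define m where "m = X x0"
  have m: "m > 0" "\<And>u. u \<in> {0..T} \<Longrightarrow> m \<le> X u" using X(5) x0 by (auto simp: m_def)
  define L where "L = max (1 / m) (2 * \<bar>A\<bar> + B * B / m)"
  have L: "L \<ge> 0" using m by (simp add: L_def le_max_iff_disj)
  show ?thesis
  proof (rule abs_continuous_on_interval_dominated[OF X(2)[OF T] L])
    fix c d assume cd: "0 \<le> c" "c \<le> d" "d \<le> T"
    define J where "J = integral {0..d} (\<lambda>s. 1 / X s) - integral {0..c} (\<lambda>s. 1 / X s)"
    have J: "0 \<le> J" "J \<le> (d - c) / m"
      using integral_inverse_increment_bounds[OF X(3)[OF T] m(2) m(1) cd] by (simp_all add: J_def)
    have "\<bar>riccati_potential A B X d - riccati_potential A B X c\<bar>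
        = \<bar>- (ln (X d) - ln (X c)) + 2 * A * (d - c) + B * B * J\<bar>"
      by (simp add: riccati_potential_def J_def algebra_simps)
    also have "\<dots> \<le> \<bar>ln (X d) - ln (X c)\<bar> + 2 * \<bar>A\<bar> * (d - c) + B * B * J"
      using cd J by (simp add: abs_mult abs_triangle_ineq order.trans[OF abs_triangle_ineq add_mono])
    also have "\<dots> \<le> \<bar>X d - X c\<bar> / m + 2 * \<bar>A\<bar> * (d - c) + B * B * ((d - c) / m)"
      using m cd J by (intro add_mono abs_ln_diff_le mult_left_mono) auto
    also have "\<dots> = (1 / m) * \<bar>X d - X c\<bar> + (2 * \<bar>A\<bar> + B * B / m) * (d - c)"
      by (simp add: algebra_simps)
    also have "\<dots> \<le> L * \<bar>X d - X c\<bar> + L * (d - c)"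
      using cd by (intro add_mono mult_right_mono) (auto simp: L_def)
    finally show "\<bar>riccati_potential A B X d - riccati_potential A B X c\<bar>
        \<le> L * \<bar>X d - X c\<bar> + L * (d - c)" .
  qed
qed

lemma riccati_potential_derivative:
  assumes ric: "riccati_solution_scalar A B \<Sigma>0 C X" and T: "T \<ge> 0"
  shows "AE u in lborel. u \<in> {0..T} \<longrightarrow>
    (riccati_potential A B X has_real_derivative C u * X u * C u) (at u within {0..T})"
  using riccati_solution_scalarD(6)[OF ric]
proof eventually_elim
  case (elim u)
  note X = riccati_solution_scalarD[OF ric]
  show ?case
  proof
    assume u: "u \<in> {0..T}"
    define X' where "X' = A * X u + X u * A - X u * C u * C u * X u + B * B"
    have pos: "X u > 0" using X(5) u by simp
    have dX: "(X has_real_derivative X') (at u within {0..T})"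
      using elim u unfolding X'_def by (auto intro: has_field_derivative_at_within)
    have "continuous_on {0..T} (\<lambda>s. 1 / X s)"
      using X(3)[OF T] X(5) by (intro continuous_intros) (auto simp: less_imp_neq[symmetric])
    then have dJ: "((\<lambda>u. integral {0..u} (\<lambda>s. 1 / X s)) has_real_derivative (1 / X u)) (at u within {0..T})"
      by (rule integral_has_real_derivative[OF _ u])
    have dln: "((\<lambda>u. ln (X u)) has_real_derivative (1 / X u * X')) (at u within {0..T})"
      by (rule DERIV_chain2[OF DERIV_ln_divide[OF pos] dX])
    have "(riccati_potential A B X has_real_derivative (- (1 / X u * X') + 2 * A * 1 + B * B * (1 / X u)))
        (at u within {0..T})"
      unfolding riccati_potential_def
      by (intro DERIV_add DERIV_minus DERIV_cmult dln dJ DERIV_ident)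
    moreover have "- (1 / X u * X') + 2 * A * 1 + B * B * (1 / X u) = C u * X u * C u"
      using pos unfolding X'_def by (simp add: field_simps)
    ultimately show "(riccati_potential A B X has_real_derivative C u * X u * C u) (at u within {0..T})"
      by simp
  qed
qed

lemma riccati_rate_integral_ge:
  assumes ric: "riccati_solution_scalar A B \<Sigma>0 C X" and A: "A < 0" and T: "T \<ge> 0"
  shows "ennreal (ln \<Sigma>0 - ln (max \<Sigma>0 (-(B * B) / (2 * A))) + 2 * A * T
            + B * B * integral {0..T} (\<lambda>s. 1 / X s))
         \<le> (\<integral>\<^sup>+t\<in>{0..T}. ennreal (C t * X t * C t) \<partial>lborel)"
proof -
  note X = riccati_solution_scalarD[OF ric]
  define P where "P = riccati_potential A B X"
  \<comment> \<open>a Borel function agreeing with \<open>C\<^sup>2 X\<close> on \<open>[0, T]\<close>; \<open>C\<close> itself is only measurable on \<open>[0, \<infinity>)\<close>\<close>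
  define g where "g u = (indicator {0..} u *\<^sub>R C u) * (indicator {0..T} u *\<^sub>R X u)
     * (indicator {0..} u *\<^sub>R C u)" for u
  have g_eq: "g u = C u * X u * C u" if "u \<in> {0..T}" for u using that by (simp add: g_def)
  have "(\<lambda>u. indicator {0..} u *\<^sub>R C u) \<in> borel_measurable borel"
    using X(1) by (simp add: set_borel_measurable_def)
  moreover have "(\<lambda>u. indicator {0..T} u *\<^sub>R X u) \<in> borel_measurable borel"
    using X(3)[OF T] by (intro borel_measurable_continuous_on_indicator) auto
  ultimately have g_meas: "g \<in> borel_measurable borel" unfolding g_def by measurable
  have g_nonneg: "g u \<ge> 0" if "u \<in> {0..T}" for u
  proof -
    have "0 \<le> C u * C u" by simp
    then have "0 \<le> X u * (C u * C u)" using X(5)[of u] that by simp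
    then show ?thesis by (simp add: g_eq[OF that] algebra_simps)
  qed
  have "ennreal (P T - P 0) \<le> (\<integral>\<^sup>+u\<in>{0..T}. ennreal (g u) \<partial>lborel)"
  proof (rule abs_continuous_increment_le_nn_integral[OF T _ g_meas g_nonneg])
    show "abs_continuous_on_interval 0 T P"
      unfolding P_def by (rule riccati_potential_abs_continuous[OF ric T])
    show "AE t in lborel. t \<in> {0..T} \<longrightarrow> (\<exists>d. (P has_real_derivative d) (at t within {0..T}) \<and> d \<le> g t)"
      using riccati_potential_derivative[OF ric T] unfolding P_def
      by eventually_elim (auto simp: g_eq)
  qed
  also have "(\<integral>\<^sup>+u\<in>{0..T}. ennreal (g u) \<partial>lborel) = (\<integral>\<^sup>+t\<in>{0..T}. ennreal (C t * X t * C t) \<partial>lborel)"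
    by (intro nn_integral_cong) (auto simp: g_eq split: split_indicator)
  finally have rate: "ennreal (P T - P 0) \<le> (\<integral>\<^sup>+t\<in>{0..T}. ennreal (C t * X t * C t) \<partial>lborel)" .
  have "ln (X T) \<le> ln (max \<Sigma>0 (-(B * B) / (2 * A)))"
    using riccati_solution_bounded[OF ric A T] X(5)[OF T] by simp
  then have "ln \<Sigma>0 - ln (max \<Sigma>0 (-(B * B) / (2 * A))) + 2 * A * T
      + B * B * integral {0..T} (\<lambda>s. 1 / X s) \<le> P T - P 0"
    using X(4) by (simp add: P_def riccati_potential_def)
  then show ?thesis using rate by (meson ennreal_leI order.trans)
qed

text \<open>Integrating the tangent line of the convex function \<open>1 / x\<close> at \<open>x = a\<close>.\<close>
lemma integral_inverse_ge_tangent: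
  fixes X :: "real \<Rightarrow> real"
  assumes T: "0 \<le> T" and a: "a > 0"
    and X: "continuous_on {0..T} X" "\<And>u. u \<in> {0..T} \<Longrightarrow> X u > 0"
  shows "2 * T / a - integral {0..T} X / a\<^sup>2 \<le> integral {0..T} (\<lambda>s. 1 / X s)"
proof -
  have tangent: "2 / a - X s / a\<^sup>2 \<le> 1 / X s" if "s \<in> {0..T}" for s
  proof -
    have x: "X s > 0" using X(2) that by simp
    have "0 \<le> (X s - a)\<^sup>2 / (X s * a\<^sup>2)" using x by simp
    also have "\<dots> = 1 / X s - (2 / a - X s / a\<^sup>2)"
      using x a by (simp add: field_simps power2_eq_square)
    finally show ?thesis by simp
  qed
  have "integral {0..T} (\<lambda>s. 2 / a - X s / a\<^sup>2) \<le> integral {0..T} (\<lambda>s. 1 / X s)"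
    using X a tangent
    by (intro integral_le integrable_continuous_interval continuous_intros) (auto simp: less_imp_neq[symmetric])
  moreover have "integral {0..T} (\<lambda>s. 2 / a - X s / a\<^sup>2) = 2 * T / a - integral {0..T} X / a\<^sup>2"
    using X(1) T
    by (subst integral_diff) (auto intro!: integrable_continuous_interval continuous_intros simp: divide_inverse)
  ultimately show ?thesis by simp
qed

lemma riccati_rate_window_ge:
  assumes ric: "riccati_solution_scalar A B \<Sigma>0 C X" and A: "A < 0" and T: "T > 0" and a: "a > 0"
    and avg: "(\<integral>\<^sup>+t\<in>{0..T}. ennreal (X t) \<partial>lborel) < ennreal (a * T)"
  shows "ennreal (ln \<Sigma>0 - ln (max \<Sigma>0 (-(B * B) / (2 * A))) + (2 * A + B * B / a) * T)
         \<le> (\<integral>\<^sup>+t\<in>{0..T}. ennreal (C t * X t * C t) \<partial>lborel)"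
proof -
  note X = riccati_solution_scalarD[OF ric]
  have cont: "continuous_on {0..T} X" and pos: "\<And>u. u \<in> {0..T} \<Longrightarrow> X u > 0"
    using X(3,5) T by auto
  have "(X has_integral integral {0..T} X) {0..T}"
    using cont by (intro integrable_integral integrable_continuous_interval)
  then have "(\<integral>\<^sup>+t\<in>{0..T}. ennreal (X t) \<partial>lborel) = ennreal (integral {0..T} X)"
    using pos by (intro nn_integral_has_integral_lebesgue') (auto intro: less_imp_le)
  moreover have "0 \<le> integral {0..T} X"
    using cont pos by (intro integral_nonneg integrable_continuous_interval) (auto intro: less_imp_le)
  ultimately have "integral {0..T} X < a * T"
    using avg by (simp add: ennreal_less_iff)
  then have "T / a \<le> 2 * T / a - integral {0..T} X / a\<^sup>2"
    using a by (simp add: field_simps power2_eq_square)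
  also have "\<dots> \<le> integral {0..T} (\<lambda>s. 1 / X s)"
    using T a cont pos by (intro integral_inverse_ge_tangent) auto
  finally have "B * B * (T / a) \<le> B * B * integral {0..T} (\<lambda>s. 1 / X s)"
    by (rule mult_left_mono) simp
  then have "ennreal (ln \<Sigma>0 - ln (max \<Sigma>0 (-(B * B) / (2 * A))) + (2 * A + B * B / a) * T)
      \<le> ennreal (ln \<Sigma>0 - ln (max \<Sigma>0 (-(B * B) / (2 * A))) + 2 * A * T
            + B * B * integral {0..T} (\<lambda>s. 1 / X s))"
    by (intro ennreal_leI) (simp add: algebra_simps)
  also have "\<dots> \<le> (\<integral>\<^sup>+t\<in>{0..T}. ennreal (C t * X t * C t) \<partial>lborel)"
    using riccati_rate_integral_ge[OF ric A] T by simp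
  finally show ?thesis .
qed

section \<open>Lower bound on the rate\<close>

lemma rate_scalar_ge_of_distortion_less:
  assumes ric: "riccati_solution_scalar A B \<Sigma>0 C X" and A: "A < 0" and a: "a > 0"
    and dist: "distortion_scalar X < ennreal a"
  shows "ennreal ((2 * A + B * B / a) / (2 * ln 2)) \<le> rate_scalar C X"
proof -
  define c0 where "c0 = ln \<Sigma>0 - ln (max \<Sigma>0 (-(B * B) / (2 * A)))"
  define h where "h T = (c0 / T + 2 * A + B * B / a) / (2 * ln 2)" for T
  have "eventually (\<lambda>T. ennreal (h T) \<le> ennreal (1 / T) * ennreal (1 / (2 * ln 2)) *
      (\<integral>\<^sup>+t\<in>{0..T}. ennreal (C t * X t * C t) \<partial>lborel)) at_top"
    using Limsup_lessD[OF dist[unfolded distortion_scalar_def]] eventually_gt_at_top[of 0]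
  proof eventually_elim
    case (elim T)
    have "(\<integral>\<^sup>+t\<in>{0..T}. ennreal (X t) \<partial>lborel)
        = ennreal T * (ennreal (1 / T) * (\<integral>\<^sup>+t\<in>{0..T}. ennreal (X t) \<partial>lborel))"
      using elim by (simp add: mult.assoc[symmetric] ennreal_mult'[symmetric])
    also have "\<dots> < ennreal T * ennreal a"
      using elim by (intro ennreal_mult_strict_left_mono) auto
    finally have "(\<integral>\<^sup>+t\<in>{0..T}. ennreal (X t) \<partial>lborel) < ennreal (a * T)"
      using elim a by (simp add: ennreal_mult' mult.commute)
    then have "ennreal (c0 + (2 * A + B * B / a) * T)
        \<le> (\<integral>\<^sup>+t\<in>{0..T}. ennreal (C t * X t * C t) \<partial>lborel)"
      unfolding c0_def using riccati_rate_window_ge[OF ric A _ a] elim by simp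
    then have "ennreal (1 / T) * ennreal (1 / (2 * ln 2)) * ennreal (c0 + (2 * A + B * B / a) * T)
        \<le> ennreal (1 / T) * ennreal (1 / (2 * ln 2)) * (\<integral>\<^sup>+t\<in>{0..T}. ennreal (C t * X t * C t) \<partial>lborel)"
      by (rule mult_left_mono) simp
    moreover have "ennreal (1 / T) * ennreal (1 / (2 * ln 2)) * ennreal (c0 + (2 * A + B * B / a) * T)
        = ennreal (h T)"
      using elim by (simp add: ennreal_mult'[symmetric] h_def field_simps)
    ultimately show ?case by simp
  qed
  then have "Limsup at_top (\<lambda>T. ennreal (h T)) \<le> rate_scalar C X"
    unfolding rate_scalar_def by (rule Limsup_mono)
  moreover have "((\<lambda>T. ennreal (h T)) \<longlongrightarrow> ennreal ((2 * A + B * B / a) / (2 * ln 2))) at_top"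
  proof -
    have "((\<lambda>T. c0 / T) \<longlongrightarrow> 0) at_top"
      by (rule tendsto_divide_0[OF tendsto_const filterlim_at_top_imp_at_infinity[OF filterlim_ident]])
    then have "((\<lambda>T. c0 / T + 2 * A + B * B / a) \<longlongrightarrow> 2 * A + B * B / a) at_top"
      using tendsto_add[OF tendsto_add[OF _ tendsto_const] tendsto_const] by fastforce
    then have "((\<lambda>T. (c0 / T + 2 * A + B * B / a) / (2 * ln 2))
        \<longlongrightarrow> (2 * A + B * B / a) / (2 * ln 2)) at_top"
      by (rule tendsto_divide[OF _ tendsto_const]) simp_all
    then show ?thesis unfolding h_def by (rule tendsto_ennrealI)
  qed
  ultimately show ?thesis by (simp add: lim_imp_Limsup)
qed

lemma rate_scalar_ge:
  assumes ric: "riccati_solution_scalar A B \<Sigma>0 C X" and A: "A < 0" and D: "D > 0"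
    and dist: "distortion_scalar X \<le> ennreal D"
  shows "ennreal ((2 * A + B * B / D) / (2 * ln 2)) \<le> rate_scalar C X"
proof (rule tendsto_le[OF trivial_limit_at_right_real tendsto_const])
  show "((\<lambda>a. ennreal ((2 * A + B * B / a) / (2 * ln 2)))
      \<longlongrightarrow> ennreal ((2 * A + B * B / D) / (2 * ln 2))) (at_right D)"
    using D by (intro tendsto_ennrealI tendsto_intros) auto
  show "\<forall>\<^sub>F a in at_right D. ennreal ((2 * A + B * B / a) / (2 * ln 2)) \<le> rate_scalar C X"
    using eventually_at_right_less[of D]
  proof eventually_elim
    case (elim a)
    then have "ennreal D < ennreal a" using D by (simp add: ennreal_lessI)
    then have "distortion_scalar X < ennreal a" by (rule order.strict_trans1[OF dist])
    then show ?case using rate_scalar_ge_of_distortion_less[OF ric A] elim D by simp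
  qed
qed

section \<open>Exponentially relaxing solutions\<close>

lemma nn_integral_exp_neg_le:
  fixes k T :: real
  assumes k: "k < 0" and T: "T \<ge> 0"
  shows "(\<integral>\<^sup>+t\<in>{0..T}. ennreal (exp (k * t)) \<partial>lborel) \<le> ennreal (- 1 / k)"
proof -
  have "((\<lambda>t. exp (k * t)) has_integral (exp (k * T) / k - exp (k * 0) / k)) {0..T}"
    using T k by (intro fundamental_theorem_of_calculus)
      (auto intro!: derivative_eq_intros simp: has_real_derivative_iff_has_vector_derivative[symmetric])
  then have "(\<integral>\<^sup>+t\<in>{0..T}. ennreal (exp (k * t)) \<partial>lborel) = ennreal ((exp (k * T) - 1) / k)"
    by (subst nn_integral_has_integral_lebesgue') (auto simp: diff_divide_distrib)
  also have "\<dots> \<le> ennreal (- 1 / k)"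
    using k by (intro ennreal_leI) (simp add: divide_simps)
  finally show ?thesis .
qed

lemma Limsup_average_le_of_exp_decay:
  fixes h :: "real \<Rightarrow> real"
  assumes k: "k < 0" and h: "\<And>t. t \<ge> 0 \<Longrightarrow> 0 \<le> h t" "\<And>t. t \<ge> 0 \<Longrightarrow> h t \<le> L + R * exp (k * t)"
    and L: "L \<ge> 0" and R: "R \<ge> 0" and c: "c \<ge> 0"
  shows "Limsup at_top (\<lambda>T. ennreal (1 / T) * ennreal c * (\<integral>\<^sup>+t\<in>{0..T}. ennreal (h t) \<partial>lborel))
           \<le> ennreal (c * L)"
proof -
  define H where "H T = c * L + c * R * (- 1 / k) / T" for T
  have "eventually (\<lambda>T. ennreal (1 / T) * ennreal c * (\<integral>\<^sup>+t\<in>{0..T}. ennreal (h t) \<partial>lborel)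
      \<le> ennreal (H T)) at_top"
    using eventually_gt_at_top[of 0]
  proof eventually_elim
    case (elim T)
    have "(\<integral>\<^sup>+t\<in>{0..T}. ennreal (h t) \<partial>lborel)
        \<le> (\<integral>\<^sup>+t. ennreal L * indicator {0..T} t + ennreal R * (ennreal (exp (k * t)) * indicator {0..T} t) \<partial>lborel)"
      using h L R by (intro nn_integral_mono)
        (auto split: split_indicator simp flip: ennreal_mult ennreal_plus intro!: ennreal_leI)
    also have "\<dots> = ennreal L * emeasure lborel {0..T} + ennreal R * (\<integral>\<^sup>+t\<in>{0..T}. ennreal (exp (k * t)) \<partial>lborel)"
      by (subst nn_integral_add) (auto simp: nn_integral_cmult)
    also have "\<dots> \<le> ennreal L * ennreal T + ennreal R * ennreal (- 1 / k)"
      using elim k by (intro add_mono mult_left_mono nn_integral_exp_neg_le) auto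
    also have "\<dots> = ennreal (L * T + R * (- 1 / k))"
    proof -
      have "0 \<le> - 1 / k" using k by simp
      then show ?thesis using L R elim by (metis ennreal_mult ennreal_plus less_imp_le mult_nonneg_nonneg)
    qed
    finally have "ennreal (1 / T) * ennreal c * (\<integral>\<^sup>+t\<in>{0..T}. ennreal (h t) \<partial>lborel)
        \<le> ennreal (1 / T) * ennreal c * ennreal (L * T + R * (- 1 / k))"
      by (rule mult_left_mono) simp
    also have "\<dots> = ennreal (H T)"
      using elim c k by (simp add: H_def ennreal_mult'[symmetric] field_simps)
    finally show ?case .
  qed
  then have "Limsup at_top (\<lambda>T. ennreal (1 / T) * ennreal c * (\<integral>\<^sup>+t\<in>{0..T}. ennreal (h t) \<partial>lborel))
      \<le> Limsup at_top (\<lambda>T. ennreal (H T))"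
    by (rule Limsup_mono)
  also have "\<dots> = ennreal (c * L)"
  proof (intro lim_imp_Limsup tendsto_ennrealI)
    have "((\<lambda>T. c * R * (- 1 / k) / T) \<longlongrightarrow> 0) at_top"
      by (rule tendsto_divide_0[OF tendsto_const filterlim_at_top_imp_at_infinity[OF filterlim_ident]])
    then show "(H \<longlongrightarrow> c * L) at_top"
      unfolding H_def using tendsto_add[OF tendsto_const] by fastforce
  qed simp
  finally show ?thesis .
qed

lemma abs_exp_diff_le:
  fixes u w :: real
  assumes "u \<le> w" "w \<le> 0"
  shows "\<bar>exp w - exp u\<bar> \<le> w - u"
proof -
  have eq: "exp w - exp u = exp w * (1 - exp (u - w))" by (simp add: exp_diff field_simps)
  have tangent: "1 - exp (u - w) \<le> w - u" using exp_ge_add_one_self[of "u - w"] by linarith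
  have bounds: "0 \<le> 1 - exp (u - w)" "exp w \<le> 1" using assms by auto
  have "exp w * (1 - exp (u - w)) \<le> 1 * (w - u)"
    by (intro mult_mono) (use tangent bounds in auto)
  then show ?thesis using bounds by (simp add: eq)
qed

text \<open>The gain \<open>C = \<surd>(B\<^sup>2 + 2 A Xf) / X\<close> makes \<open>C\<^sup>2 X\<^sup>2\<close> constant, which turns the Riccati equation
  into \<open>X' = 2 A (X - Xf)\<close>; its solution relaxes exponentially from \<open>\<Sigma>0\<close> to \<open>Xf\<close>.\<close>
definition relaxation :: "real \<Rightarrow> real \<Rightarrow> real \<Rightarrow> real \<Rightarrow> real" where
  "relaxation A \<Sigma>0 Xf t = Xf + (\<Sigma>0 - Xf) * exp (2 * A * t)"

lemma relaxation_ge_min: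
  assumes "A < 0" "t \<ge> 0"
  shows "min \<Sigma>0 Xf \<le> relaxation A \<Sigma>0 Xf t"
proof -
  have e: "0 < exp (2 * A * t)" "exp (2 * A * t) \<le> 1" using assms by (auto simp: mult_nonpos_nonneg)
  have "min \<Sigma>0 Xf * (1 - exp (2 * A * t)) + min \<Sigma>0 Xf * exp (2 * A * t)
      \<le> Xf * (1 - exp (2 * A * t)) + \<Sigma>0 * exp (2 * A * t)"
    using e by (intro add_mono mult_right_mono) auto
  then show ?thesis by (simp add: relaxation_def algebra_simps)
qed

lemma relaxation_le:
  "relaxation A \<Sigma>0 Xf t \<le> Xf + \<bar>\<Sigma>0 - Xf\<bar> * exp (2 * A * t)"
  by (simp add: relaxation_def mult_right_mono)

lemma relaxation_riccati_solution:
  assumes A: "A < 0" and \<Sigma>0: "\<Sigma>0 > 0" and Xf: "0 < Xf" "Xf \<le> -(B * B) / (2 * A)"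
  shows "riccati_solution_scalar A B \<Sigma>0
           (\<lambda>t. sqrt (B * B + 2 * A * Xf) / relaxation A \<Sigma>0 Xf t) (relaxation A \<Sigma>0 Xf)"
proof -
  define X where "X = relaxation A \<Sigma>0 Xf"
  define K where "K = B * B + 2 * A * Xf"
  have "2 * A * (-(B * B) / (2 * A)) \<le> 2 * A * Xf" using Xf A by (intro mult_left_mono_neg) auto
  then have K: "K \<ge> 0" using A by (simp add: K_def)
  have X_pos: "X t > 0" if "t \<ge> 0" for t
    using relaxation_ge_min[OF A that, of \<Sigma>0 Xf] \<Sigma>0 Xf by (simp add: X_def)
  have "continuous_on {0..} (\<lambda>t. sqrt K / X t)"
    unfolding X_def relaxation_def using X_pos
    by (intro continuous_intros) (auto simp: X_def relaxation_def less_imp_neq[symmetric])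
  then have "set_borel_measurable lborel {0..} (\<lambda>t. sqrt K / X t)"
    unfolding set_borel_measurable_def
    using borel_measurable_continuous_on_indicator[of "{0..}" "\<lambda>t. sqrt K / X t"] by simp
  moreover have "abs_continuous_on_interval 0 b X" for b
  proof (rule abs_continuous_on_interval_lipschitz[of "\<bar>\<Sigma>0 - Xf\<bar> * (2 * \<bar>A\<bar>)"])
    fix c d :: real assume cd: "0 \<le> c" "c \<le> d" "d \<le> b"
    have "\<bar>X d - X c\<bar> = \<bar>\<Sigma>0 - Xf\<bar> * \<bar>exp (2 * A * d) - exp (2 * A * c)\<bar>"
      by (simp add: X_def relaxation_def algebra_simps abs_mult[symmetric])
    also have "\<bar>exp (2 * A * d) - exp (2 * A * c)\<bar> \<le> 2 * A * c - 2 * A * d"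
      using cd A by (subst abs_minus_commute, intro abs_exp_diff_le)
        (auto simp: mult_nonpos_nonneg intro: mult_left_mono_neg)
    also have "2 * A * c - 2 * A * d = (2 * \<bar>A\<bar>) * (d - c)" using A by (simp add: algebra_simps)
    finally show "\<bar>X d - X c\<bar> \<le> \<bar>\<Sigma>0 - Xf\<bar> * (2 * \<bar>A\<bar>) * (d - c)"
      by (simp add: mult_left_mono mult.assoc)
  qed simp
  moreover have "(X has_real_derivative (A * X t + X t * A - X t * (sqrt K / X t) * (sqrt K / X t) * X t + B * B))
      (at t)" if "t \<ge> 0" for t
  proof -
    have "(X has_real_derivative ((\<Sigma>0 - Xf) * (exp (2 * A * t) * (2 * A)))) (at t)"
      unfolding X_def relaxation_def by (auto intro!: derivative_eq_intros)
    moreover have "X t * (sqrt K / X t) * (sqrt K / X t) * X t = K"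
      using X_pos[OF that] K by (simp add: field_simps)
    ultimately show ?thesis by (simp add: X_def relaxation_def K_def algebra_simps)
  qed
  ultimately show ?thesis
    using X_pos unfolding riccati_solution_scalar_def abs_continuous_on_halfline_def
    by (auto simp: X_def K_def relaxation_def)
qed

lemma relaxation_distortion:
  assumes A: "A < 0" and \<Sigma>0: "\<Sigma>0 > 0" and Xf: "Xf > 0"
  shows "distortion_scalar (relaxation A \<Sigma>0 Xf) \<le> ennreal Xf"
proof -
  have "distortion_scalar (relaxation A \<Sigma>0 Xf) = Limsup at_top (\<lambda>T. ennreal (1 / T) * ennreal 1 *
      (\<integral>\<^sup>+t\<in>{0..T}. ennreal (relaxation A \<Sigma>0 Xf t) \<partial>lborel))"
    by (simp add: distortion_scalar_def)
  also have "\<dots> \<le> ennreal (1 * Xf)"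
  proof (rule Limsup_average_le_of_exp_decay[where k = "2 * A" and R = "\<bar>\<Sigma>0 - Xf\<bar>"])
    show "0 \<le> relaxation A \<Sigma>0 Xf t" if "t \<ge> 0" for t
      using relaxation_ge_min[OF A that, of \<Sigma>0 Xf] \<Sigma>0 Xf by linarith
  qed (use A Xf relaxation_le in auto)
  finally show ?thesis by simp
qed

lemma relaxation_rate:
  assumes A: "A < 0" and \<Sigma>0: "\<Sigma>0 > 0" and Xf: "Xf > 0" and K: "K \<ge> 0"
  shows "rate_scalar (\<lambda>t. sqrt K / relaxation A \<Sigma>0 Xf t) (relaxation A \<Sigma>0 Xf)
           \<le> ennreal (K / (2 * ln 2 * Xf))"
proof -
  define X where "X = relaxation A \<Sigma>0 Xf"
  define m where "m = min \<Sigma>0 Xf"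
  have m: "m > 0" "\<And>t. t \<ge> 0 \<Longrightarrow> m \<le> X t"
    using \<Sigma>0 Xf relaxation_ge_min[OF A] by (auto simp: m_def X_def)
  have rate_integrand: "sqrt K / X t * X t * (sqrt K / X t) = K / X t" if "t \<ge> 0" for t
    using m that K by (simp add: power2_eq_square field_simps)
  have bound: "K / X t \<le> K / Xf + K * \<bar>\<Sigma>0 - Xf\<bar> / (m * Xf) * exp (2 * A * t)" if t: "t \<ge> 0" for t
  proof -
    have Xt: "X t > 0" using m t by (meson less_le_trans)
    have "K / X t - K / Xf = K * ((Xf - X t) / (X t * Xf))"
      using Xt Xf by (simp add: field_simps)
    also have "\<dots> \<le> K * (\<bar>\<Sigma>0 - Xf\<bar> * exp (2 * A * t) / (m * Xf))"
    proof (intro mult_left_mono K)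
      have "- (\<Sigma>0 - Xf) \<le> \<bar>\<Sigma>0 - Xf\<bar>" by simp
      then have "- (\<Sigma>0 - Xf) * exp (2 * A * t) \<le> \<bar>\<Sigma>0 - Xf\<bar> * exp (2 * A * t)"
        by (intro mult_right_mono) auto
      then have "Xf - X t \<le> \<bar>\<Sigma>0 - Xf\<bar> * exp (2 * A * t)"
        unfolding X_def relaxation_def by linarith
      then have "(Xf - X t) / (X t * Xf) \<le> \<bar>\<Sigma>0 - Xf\<bar> * exp (2 * A * t) / (X t * Xf)"
        using Xt Xf by (intro divide_right_mono) auto
      also have "\<dots> \<le> \<bar>\<Sigma>0 - Xf\<bar> * exp (2 * A * t) / (m * Xf)"
        using Xf m(1) m(2)[OF t] by (intro divide_left_mono mult_right_mono) auto
      finally show "(Xf - X t) / (X t * Xf) \<le> \<bar>\<Sigma>0 - Xf\<bar> * exp (2 * A * t) / (m * Xf)" .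
    qed
    finally show ?thesis by (simp add: algebra_simps)
  qed
  have "rate_scalar (\<lambda>t. sqrt K / X t) X \<le> ennreal (1 / (2 * ln 2) * (K / Xf))"
    unfolding rate_scalar_def
  proof (rule Limsup_average_le_of_exp_decay[where k = "2 * A" and R = "K * \<bar>\<Sigma>0 - Xf\<bar> / (m * Xf)"])
    show "0 \<le> sqrt K / X t * X t * (sqrt K / X t)" if "t \<ge> 0" for t
      using rate_integrand[OF that] m(2)[OF that] m(1) K by simp
  qed (use A K Xf m rate_integrand bound in auto)
  then show ?thesis by (simp add: X_def)
qed

section \<open>The information--distortion function\<close>

lemma info_distortion_scalar_le:
  assumes A: "A < 0" and B: "B \<noteq> 0" and \<Sigma>0: "\<Sigma>0 > 0" and D: "D > 0"
  shows "info_distortion_scalar A B \<Sigma>0 D \<le> ennreal ((2 * A + B * B / D) / (2 * ln 2))"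
proof -
  define Xs where "Xs = -(B * B) / (2 * A)"
  define Xf where "Xf = min D Xs"
  define K where "K = B * B + 2 * A * Xf"
  have "B * B > 0" using B by (auto simp: zero_less_mult_iff linorder_neq_iff)
  then have Xs: "Xs > 0" using A by (simp add: Xs_def divide_pos_neg)
  have Xf: "0 < Xf" "Xf \<le> D" "Xf \<le> Xs" using Xs D by (auto simp: Xf_def)
  have "2 * A * Xs \<le> 2 * A * Xf" using A Xf by (intro mult_left_mono_neg) auto
  then have K: "K \<ge> 0" using A by (simp add: K_def Xs_def)
  define C where "C t = sqrt K / relaxation A \<Sigma>0 Xf t" for t
  have "info_distortion_scalar A B \<Sigma>0 D \<le> rate_scalar C (relaxation A \<Sigma>0 Xf)"
    unfolding info_distortion_scalar_def
  proof (rule Inf_lower, intro CollectI exI conjI)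
    show "riccati_solution_scalar A B \<Sigma>0 C (relaxation A \<Sigma>0 Xf)"
      unfolding C_def K_def using relaxation_riccati_solution[OF A \<Sigma>0 Xf(1)] Xf(3) by (simp add: Xs_def)
    show "distortion_scalar (relaxation A \<Sigma>0 Xf) \<le> ennreal D"
      using relaxation_distortion[OF A \<Sigma>0 Xf(1)] ennreal_leI[OF Xf(2)] by (rule order_trans)
  qed simp
  also have "\<dots> \<le> ennreal (K / (2 * ln 2 * Xf))"
    unfolding C_def by (rule relaxation_rate[OF A \<Sigma>0 Xf(1) K])
  also have "\<dots> \<le> ennreal ((2 * A + B * B / D) / (2 * ln 2))"
  proof (cases "D \<le> Xs")
    case True
    then have "Xf = D" by (simp add: Xf_def)
    then show ?thesis using D by (simp add: K_def field_simps)
  next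
    case False
    then have "K = 0" using A by (simp add: Xf_def K_def Xs_def)
    then show ?thesis by simp
  qed
  finally show ?thesis .
qed

lemma info_distortion_scalar_ge:
  assumes "A < 0" "D > 0"
  shows "ennreal ((2 * A + B * B / D) / (2 * ln 2)) \<le> info_distortion_scalar A B \<Sigma>0 D"
  unfolding info_distortion_scalar_def using rate_scalar_ge[OF _ assms(1) assms(2)]
  by (auto intro!: Inf_greatest)

theorem mainTheorem2:
  fixes A B \<Sigma>0 D :: real
  assumes "A < 0" and "B \<noteq> 0" and "\<Sigma>0 > 0" and "D > 0"
  shows "info_distortion_scalar A B \<Sigma>0 D =
           ennreal (log 2 (exp 1) * max 0 (A + B\<^sup>2 / (2 * D)))"
proof -
  have "log 2 (exp 1) * max 0 (A + B\<^sup>2 / (2 * D)) = max 0 ((2 * A + B * B / D) / (2 * ln 2))"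
    using assms(4) by (simp add: log_def max_divide_distrib_right power2_eq_square field_simps)
  then show ?thesis
    using info_distortion_scalar_le[OF assms] info_distortion_scalar_ge[OF assms(1,4)]
    by (simp add: ennreal_max_0 antisym)
qed

end
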